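(* Let $\mathcal{H}$ be the positive orthant of the unit sphere $\mathbf{S}^\infty$ of $L^2(\mathbb{R}^n)$ (i.e., the set of a.e. nonnegative functions of unit $L^2$ norm), equipped with $d_S$. Let $\mathbf{m}_{k-1}, \mathbf{x}_k \in \mathcal{H}$ with $\langle \mathbf{m}_{k-1}, \mathbf{x}_k\rangle > 0$ and $\mathbf{m}_{k-1} \neq \mathbf{x}_k$, and let $w_k \in [0,1)$. Set $\theta = \arccos(\langle \mathbf{m}_{k-1}, \mathbf{x}_k\rangle) \in (0, \pi/2)$, $c = \tan\theta$, and $$ \alpha = \arctan\!\left( \frac{-1 + \sqrt{4c^2(1-w_k) - 4c^2(1-w_k)^2 + 1}}{2c(1-w_k)} \right). $$ Then the minimizer over $\mathbf{x} \in \mathcal{H}$ of $$ w_k\, d_S^2(\mathbf{x}_k, \mathbf{x}) + (1-w_k)\, d_S^2(\mathbf{m}_{k-1}, \mathbf{x}) $$ is $$ \mathbf{m}_k = \frac{\sin(\theta - \alpha)}{\sin\theta}\, \mathbf{m}_{k-1} + \frac{\sin\alpha}{\sin\theta}\, \mathbf{x}_k. $$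
   Context: $\mathbf{S}^\infty$ denotes the unit sphere of the Hilbert space $L^2(\mathbb{R}^n)$ with inner product $\langle\cdot,\cdot\rangle$. For $\widetilde f, \widetilde g \in \mathbf{S}^\infty$ with $\langle \widetilde f, \widetilde g\rangle \neq 0$, $d_S(\widetilde f, \widetilde g) = \sqrt{-\log \langle \widetilde f, \widetilde g\rangle^2}$ (and $d_S = +\infty$ if the inner product is $0$). *)

theory Defs
  imports "HOL-Analysis.Analysis"
begin

text \<open>Elements of L^2(R^n) are represented by real-valued functions on real^'n;
  two representatives denote the same element iff they agree almost everywhere
  w.r.t. Lebesgue (Borel) measure.\<close>

definition L2inner :: "(real^'n \<Rightarrow> real) \<Rightarrow> (real^'n \<Rightarrow> real) \<Rightarrow> real" where
  "L2inner f g = (LINT x|lborel. f x * g x)"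

definition L2 :: "(real^'n \<Rightarrow> real) set" where
  "L2 = {f. f \<in> borel_measurable lborel \<and> integrable lborel (\<lambda>x. (f x)\<^sup>2)}"

definition posorth :: "(real^'n \<Rightarrow> real) set" where
  "posorth = {f. f \<in> L2 \<and> (AE x in lborel. 0 \<le> f x) \<and> L2inner f f = 1}"

definition dS :: "(real^'n \<Rightarrow> real) \<Rightarrow> (real^'n \<Rightarrow> real) \<Rightarrow> ereal" where
  "dS f g = (if L2inner f g = 0 then \<infinity> else ereal (sqrt (- ln ((L2inner f g)\<^sup>2))))"

end

theory Submission
  imports Defs
begin

text \<open>On the positive orthant \<open>d\<^sub>S\<^sup>2(f, x) = -2 ln \<langle>f, x\<rangle>\<close>, so the objective is
  \<open>-2 (w ln \<langle>x\<^sub>k, x\<rangle> + (1 - w) ln \<langle>m, x\<rangle>)\<close>. Let \<open>z = s\<^sub>1 m + s\<^sub>2 x\<^sub>k\<close> be a unit vector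
  with \<open>s\<^sub>1 \<langle>m, z\<rangle> = 1 - w\<close> and \<open>s\<^sub>2 \<langle>x\<^sub>k, z\<rangle> = w\<close>. Applying the tangent inequality
  \<open>ln y \<le> ln Y + y / Y - 1\<close> at \<open>Y = \<langle>m, z\<rangle>\<close> and \<open>Y = \<langle>x\<^sub>k, z\<rangle>\<close>, these conditions make the
  linear terms add up to \<open>\<langle>z, x\<rangle>\<close>, so the objective at \<open>x\<close> is at least its value at \<open>z\<close>
  plus \<open>2 (1 - \<langle>z, x\<rangle>)\<close>; by Cauchy-Schwarz this is nonnegative and vanishes only
  for \<open>x = z\<close>. For the spherical interpolation \<open>z\<close> at angle \<open>\<alpha>\<close> the two conditions read
  \<open>sin \<alpha> cos (\<theta> - \<alpha>) = w sin \<theta>\<close>, a quadratic equation in \<open>tan \<alpha>\<close> whose nonnegative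
  root is the stated formula.\<close>

lemma L2_mult_integrable:
  assumes "f \<in> L2" "g \<in> L2"
  shows "integrable lborel (\<lambda>x. f x * g x)"
proof (rule Bochner_Integration.integrable_bound)
  show "integrable lborel (\<lambda>x. (f x)\<^sup>2 + (g x)\<^sup>2)" using assms unfolding L2_def by auto
  show "(\<lambda>x. f x * g x) \<in> borel_measurable lborel" using assms unfolding L2_def by auto
  have "\<bar>f x * g x\<bar> \<le> (f x)\<^sup>2 + (g x)\<^sup>2" for x
  proof -
    have "2 * (\<bar>f x\<bar> * \<bar>g x\<bar>) \<le> (f x)\<^sup>2 + (g x)\<^sup>2"
      using sum_squares_bound[of "\<bar>f x\<bar>" "\<bar>g x\<bar>"] by simp
    moreover have "0 \<le> \<bar>f x\<bar> * \<bar>g x\<bar>" by simp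
    ultimately show ?thesis unfolding abs_mult by linarith
  qed
  then show "AE x in lborel. norm (f x * g x) \<le> norm ((f x)\<^sup>2 + (g x)\<^sup>2)" by simp
qed

lemma L2_lincomb:
  assumes "f \<in> L2" "g \<in> L2"
  shows "(\<lambda>x. r * f x + q * g x) \<in> L2"
proof -
  have "(\<lambda>x. (r * f x + q * g x)\<^sup>2) = (\<lambda>x. r\<^sup>2 * (f x)\<^sup>2 + q\<^sup>2 * (g x)\<^sup>2 + (2 * r * q) * (f x * g x))"
    by (simp add: power2_eq_square algebra_simps)
  then show ?thesis using assms L2_mult_integrable[OF assms] unfolding L2_def by auto
qed

lemma L2inner_lincomb_left:
  assumes "f \<in> L2" "g \<in> L2" "h \<in> L2"
  shows "L2inner (\<lambda>x. r * f x + q * g x) h = r * L2inner f h + q * L2inner g h"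
proof -
  have "(\<lambda>x. (r * f x + q * g x) * h x) = (\<lambda>x. r * (f x * h x) + q * (g x * h x))"
    by (simp add: algebra_simps)
  then show ?thesis unfolding L2inner_def
    using L2_mult_integrable[OF assms(1,3)] L2_mult_integrable[OF assms(2,3)] by simp
qed

lemma L2inner_commute: "L2inner f g = L2inner g f"
  unfolding L2inner_def by (simp add: mult.commute)

lemma L2inner_nonneg:
  assumes "AE x in lborel. 0 \<le> f x" "AE x in lborel. 0 \<le> g x"
  shows "0 \<le> L2inner f g"
  unfolding L2inner_def using assms by (auto intro!: integral_nonneg_AE)

lemma L2inner_diff_self:
  assumes "f \<in> L2" "g \<in> L2"
  shows "L2inner (\<lambda>x. f x - g x) (\<lambda>x. f x - g x) = L2inner f f - 2 * L2inner f g + L2inner g g"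
proof -
  have diff: "L2inner (\<lambda>x. f x - g x) k = L2inner f k - L2inner g k" if "k \<in> L2" for k
    using L2inner_lincomb_left[OF assms that, of 1 "- 1"] by simp
  have "(\<lambda>x. f x - g x) \<in> L2" using L2_lincomb[OF assms, of 1 "- 1"] by simp
  then have "L2inner (\<lambda>x. f x - g x) (\<lambda>x. f x - g x)
      = L2inner (\<lambda>x. f x - g x) f - L2inner (\<lambda>x. f x - g x) g"
    using diff by (simp add: L2inner_commute)
  also have "\<dots> = L2inner f f - 2 * L2inner f g + L2inner g g"
    using diff assms by (simp add: L2inner_commute[of g f])
  finally show ?thesis .
qed

lemma L2inner_unit_le_one:
  assumes "f \<in> L2" "g \<in> L2" "L2inner f f = 1" "L2inner g g = 1"
  shows "L2inner f g \<le> 1"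
proof -
  have "0 \<le> L2inner (\<lambda>x. f x - g x) (\<lambda>x. f x - g x)"
    unfolding L2inner_def by (auto intro!: integral_nonneg_AE)
  then show ?thesis using L2inner_diff_self[OF assms(1,2)] assms(3,4) by simp
qed

lemma L2inner_unit_eq_one_imp_AE_eq:
  assumes "f \<in> L2" "g \<in> L2" "L2inner f f = 1" "L2inner g g = 1" "L2inner f g = 1"
  shows "AE x in lborel. f x = g x"
proof -
  let ?h = "\<lambda>x. f x - g x"
  have h: "?h \<in> L2" using L2_lincomb[OF assms(1,2), of 1 "- 1"] by simp
  have "L2inner ?h ?h = 0" using L2inner_diff_self[OF assms(1,2)] assms(3-5) by simp
  then have "AE x in lborel. ?h x * ?h x = 0"
    unfolding L2inner_def using integral_nonneg_eq_0_iff_AE[OF L2_mult_integrable[OF h h]] by simp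
  then show ?thesis by eventually_elim simp
qed

lemma posorth_dS_sq:
  assumes "f \<in> posorth" "g \<in> posorth"
  shows "(dS f g)\<^sup>2 = (if L2inner f g = 0 then \<infinity> else ereal (- 2 * ln (L2inner f g)))"
proof (cases "L2inner f g = 0")
  case False
  have "0 \<le> L2inner f g" "L2inner f g \<le> 1"
    using assms L2inner_nonneg L2inner_unit_le_one unfolding posorth_def by auto
  then have pos: "0 < L2inner f g" and "ln (L2inner f g) \<le> 0" using False by simp_all
  then have "0 \<le> - ln ((L2inner f g)\<^sup>2)" by (simp add: ln_realpow)
  then show ?thesis using False pos
    by (simp add: dS_def power2_eq_square[of "ereal _"] real_sqrt_mult_self ln_realpow)
qed (simp add: dS_def)

lemma weighted_ln_tangent_bound:
  fixes w a b A B :: real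
  assumes w: "0 \<le> w" "w \<le> 1" and pos: "0 < a" "0 < A" "0 < B" and b: "w = 0 \<or> 0 < b"
  shows "w * ln b + (1 - w) * ln a
         \<le> w * ln B + (1 - w) * ln A + w * (b / B) + (1 - w) * (a / A) - 1"
proof -
  have "ln a - ln A \<le> a / A - 1"
    using ln_le_minus_one[of "a / A"] pos by (simp add: ln_div)
  then have "(1 - w) * ln a \<le> (1 - w) * ln A + (1 - w) * (a / A) - (1 - w)"
    using mult_left_mono[of "ln a - ln A" "a / A - 1" "1 - w"] w by (simp add: algebra_simps)
  moreover have "w * ln b \<le> w * ln B + w * (b / B) - w"
  proof (cases "w = 0")
    case False
    then have "ln b - ln B \<le> b / B - 1"
      using ln_le_minus_one[of "b / B"] pos b by (simp add: ln_div)
    then show ?thesis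
      using mult_left_mono[of "ln b - ln B" "b / B - 1" w] w by (simp add: algebra_simps)
  qed simp
  ultimately show ?thesis by simp
qed

definition frechet_cost ::
    "real \<Rightarrow> (real^'n \<Rightarrow> real) \<Rightarrow> (real^'n \<Rightarrow> real) \<Rightarrow> (real^'n \<Rightarrow> real) \<Rightarrow> ereal" where
  "frechet_cost w m xk x = ereal w * (dS xk x)\<^sup>2 + ereal (1 - w) * (dS m x)\<^sup>2"

lemma frechet_cost_tangent_bound:
  assumes m: "m \<in> posorth" and xk: "xk \<in> posorth" and x: "x \<in> posorth"
    and w: "0 \<le> w" "w < 1" and pos: "0 < A" "0 < B"
  shows "ereal (- 2 * (w * ln B + (1 - w) * ln A)
                - 2 * (w * (L2inner xk x / B) + (1 - w) * (L2inner m x / A) - 1))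
         \<le> frechet_cost w m xk x"
proof -
  define a where "a = L2inner m x"
  define b where "b = L2inner xk x"
  have "0 \<le> a" "0 \<le> b"
    using assms L2inner_nonneg unfolding a_def b_def posorth_def by auto
  show ?thesis
  proof (cases "a = 0 \<or> (w \<noteq> 0 \<and> b = 0)")
    case True
    then have "frechet_cost w m xk x = \<infinity>"
      using w posorth_dS_sq[OF m x] posorth_dS_sq[OF xk x] \<open>0 \<le> b\<close>
      unfolding frechet_cost_def a_def b_def by auto
    then show ?thesis by simp
  next
    case False
    then have "0 < a" "w = 0 \<or> 0 < b" using \<open>0 \<le> a\<close> \<open>0 \<le> b\<close> by auto
    then have "frechet_cost w m xk x = ereal (- 2 * (w * ln b + (1 - w) * ln a))"
      using posorth_dS_sq[OF m x] posorth_dS_sq[OF xk x]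
      unfolding frechet_cost_def a_def b_def by (auto simp: algebra_simps)
    then show ?thesis
      using weighted_ln_tangent_bound[OF w(1) _ \<open>0 < a\<close> pos \<open>w = 0 \<or> 0 < b\<close>] w
      unfolding a_def b_def by simp
  qed
qed

lemma posorth_lincomb:
  assumes m: "m \<in> posorth" and xk: "xk \<in> posorth" and s: "0 \<le> s1" "0 \<le> s2"
    and unit: "s1 * (s1 + s2 * L2inner m xk) + s2 * (s1 * L2inner m xk + s2) = 1"
  shows "(\<lambda>t. s1 * m t + s2 * xk t) \<in> posorth"
proof -
  have mL: "m \<in> L2" and m0: "AE t in lborel. 0 \<le> m t" and mm: "L2inner m m = 1"
    and xL: "xk \<in> L2" and x0: "AE t in lborel. 0 \<le> xk t" and xx: "L2inner xk xk = 1"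
    using m xk unfolding posorth_def by auto
  let ?z = "\<lambda>t. s1 * m t + s2 * xk t"
  have zL: "?z \<in> L2" using L2_lincomb[OF mL xL] .
  have "L2inner ?z ?z = s1 * L2inner m ?z + s2 * L2inner xk ?z"
    using L2inner_lincomb_left[OF mL xL zL] .
  also have "\<dots> = 1"
    using L2inner_lincomb_left[OF mL xL mL] L2inner_lincomb_left[OF mL xL xL] mm xx unit
    by (simp add: L2inner_commute[of _ ?z] L2inner_commute[of xk m])
  finally have "L2inner ?z ?z = 1" .
  moreover have "AE t in lborel. 0 \<le> ?z t"
    using m0 x0 by eventually_elim (simp add: s)
  ultimately show ?thesis using zL unfolding posorth_def by simp
qed

lemma frechet_cost_critical_point_bound:
  fixes m xk :: "real^'n \<Rightarrow> real" and w s1 s2 :: real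
  assumes m: "m \<in> posorth" and xk: "xk \<in> posorth" and p: "0 < L2inner m xk"
    and w: "0 \<le> w" "w < 1" and s: "0 \<le> s1" "0 \<le> s2"
    and s1: "s1 * (s1 + s2 * L2inner m xk) = 1 - w"
    and s2: "s2 * (s1 * L2inner m xk + s2) = w"
  defines "mk \<equiv> \<lambda>t. s1 * m t + s2 * xk t"
  shows "\<bar>frechet_cost w m xk mk\<bar> \<noteq> \<infinity>"
    and "x \<in> posorth \<Longrightarrow>
         frechet_cost w m xk mk + ereal (2 * (1 - L2inner mk x)) \<le> frechet_cost w m xk x"
proof -
  have mL: "m \<in> L2" "L2inner m m = 1" and xL: "xk \<in> L2" "L2inner xk xk = 1"
    using m xk unfolding posorth_def by auto
  define A where "A = s1 + s2 * L2inner m xk"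
  define B where "B = s1 * L2inner m xk + s2"
  have s1A: "s1 * A = 1 - w" and s2B: "s2 * B = w" using s1 s2 unfolding A_def B_def .
  have "0 \<le> A" "0 < s1 * A" using s1A s p w unfolding A_def by simp_all
  then have "0 < s1" "0 < A" using s(1) by (auto simp: zero_less_mult_iff)
  then have "0 < B" using s p unfolding B_def by (simp add: add_pos_nonneg)
  have mkP: "mk \<in> posorth"
    unfolding mk_def using posorth_lincomb[OF m xk s] s1 s2 w by simp
  have inner: "L2inner mk h = s1 * L2inner m h + s2 * L2inner xk h" if "h \<in> L2" for h
    unfolding mk_def using L2inner_lincomb_left[OF mL(1) xL(1) that] .
  have "L2inner m mk = A" "L2inner xk mk = B"
    using inner[OF mL(1)] inner[OF xL(1)] mL xL unfolding A_def B_def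
    by (simp_all add: L2inner_commute[of _ mk] L2inner_commute[of xk m])
  then have cost_mk: "frechet_cost w m xk mk = ereal (- 2 * (w * ln B + (1 - w) * ln A))"
    using posorth_dS_sq[OF m mkP] posorth_dS_sq[OF xk mkP] \<open>0 < A\<close> \<open>0 < B\<close>
    unfolding frechet_cost_def by (simp add: algebra_simps)
  then show "\<bar>frechet_cost w m xk mk\<bar> \<noteq> \<infinity>" by simp
  assume x: "x \<in> posorth"
  have "w * (L2inner xk x / B) = s2 * L2inner xk x" using \<open>0 < B\<close> by (simp add: s2B[symmetric])
  moreover have "(1 - w) * (L2inner m x / A) = s1 * L2inner m x"
    using \<open>0 < A\<close> by (simp add: s1A[symmetric])
  ultimately have "frechet_cost w m xk mk + ereal (2 * (1 - L2inner mk x))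
      = ereal (- 2 * (w * ln B + (1 - w) * ln A)
               - 2 * (w * (L2inner xk x / B) + (1 - w) * (L2inner m x / A) - 1))"
    using inner x cost_mk unfolding posorth_def by simp
  also have "\<dots> \<le> frechet_cost w m xk x"
    by (rule frechet_cost_tangent_bound[OF m xk x w \<open>0 < A\<close> \<open>0 < B\<close>])
  finally show "frechet_cost w m xk mk + ereal (2 * (1 - L2inner mk x)) \<le> frechet_cost w m xk x" .
qed

lemma frechet_cost_minimizer:
  fixes m xk :: "real^'n \<Rightarrow> real" and w s1 s2 :: real
  assumes m: "m \<in> posorth" and xk: "xk \<in> posorth" and p: "0 < L2inner m xk"
    and w: "0 \<le> w" "w < 1" and s: "0 \<le> s1" "0 \<le> s2"
    and s1: "s1 * (s1 + s2 * L2inner m xk) = 1 - w"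
    and s2: "s2 * (s1 * L2inner m xk + s2) = w"
  defines "mk \<equiv> \<lambda>t. s1 * m t + s2 * xk t"
  shows "mk \<in> posorth" "\<forall>x \<in> posorth. frechet_cost w m xk mk \<le> frechet_cost w m xk x"
    "\<forall>x \<in> posorth. frechet_cost w m xk x \<le> frechet_cost w m xk mk \<longrightarrow> (AE t in lborel. x t = mk t)"
proof -
  show mkP: "mk \<in> posorth"
    unfolding mk_def using posorth_lincomb[OF m xk s] s1 s2 w by simp
  note finite = frechet_cost_critical_point_bound(1)[OF m xk p w s s1 s2, folded mk_def]
  note bound = frechet_cost_critical_point_bound(2)[OF m xk p w s s1 s2, folded mk_def]
  have le_one: "L2inner mk x \<le> 1" if "x \<in> posorth" for x
    using L2inner_unit_le_one mkP that unfolding posorth_def by auto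
  show "\<forall>x \<in> posorth. frechet_cost w m xk mk \<le> frechet_cost w m xk x"
  proof
    fix x :: "real^'n \<Rightarrow> real" assume x: "x \<in> posorth"
    have "frechet_cost w m xk mk \<le> frechet_cost w m xk mk + ereal (2 * (1 - L2inner mk x))"
      using le_one[OF x] by (simp add: ereal_le_add_self)
    then show "frechet_cost w m xk mk \<le> frechet_cost w m xk x"
      using bound[OF x] by (rule order.trans)
  qed
  show "\<forall>x \<in> posorth. frechet_cost w m xk x \<le> frechet_cost w m xk mk \<longrightarrow> (AE t in lborel. x t = mk t)"
  proof (intro ballI impI)
    fix x :: "real^'n \<Rightarrow> real"
    assume x: "x \<in> posorth" and le: "frechet_cost w m xk x \<le> frechet_cost w m xk mk"
    have "frechet_cost w m xk mk + ereal (2 * (1 - L2inner mk x)) \<le> frechet_cost w m xk mk"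
      using bound[OF x] le by (rule order.trans)
    then have "L2inner mk x = 1" using le_one[OF x] finite
      by (cases "frechet_cost w m xk mk") simp_all
    then have "AE t in lborel. mk t = x t"
      using L2inner_unit_eq_one_imp_AE_eq mkP x unfolding posorth_def by blast
    then show "AE t in lborel. x t = mk t" by eventually_elim simp
  qed
qed

lemma quadratic_positive_root:
  fixes a b :: real
  assumes "0 < a" "0 \<le> b"
  defines "t \<equiv> (- 1 + sqrt (1 + 4 * a * b)) / (2 * a)"
  shows "a * t\<^sup>2 + t = b" "0 \<le> t"
proof -
  show "0 \<le> t" unfolding t_def using assms by simp
  have "2 * a * t + 1 = sqrt (1 + 4 * a * b)" unfolding t_def using assms(1) by simp
  then have "(2 * a * t + 1)\<^sup>2 = 1 + 4 * a * b" using assms by simp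
  then have "4 * a * (a * t\<^sup>2 + t) = 4 * a * b" by (simp add: power2_eq_square algebra_simps)
  then show "a * t\<^sup>2 + t = b" using assms(1) by simp
qed

lemma arctan_root_angle_identities:
  fixes \<theta> w t :: real
  assumes \<theta>: "0 < \<theta>" "\<theta> < pi / 2" and w: "0 \<le> w" "w \<le> 1" and t: "0 \<le> t"
    and root: "(1 - w) * tan \<theta> * t\<^sup>2 + t = w * tan \<theta>"
  defines "\<alpha> \<equiv> arctan t"
  shows "0 \<le> \<alpha>" "\<alpha> \<le> \<theta>" "sin \<alpha> * cos (\<theta> - \<alpha>) = w * sin \<theta>"
    "sin (\<theta> - \<alpha>) * cos \<alpha> = (1 - w) * sin \<theta>"
proof -
  have cos\<theta>: "0 < cos \<theta>" using \<theta> by (simp add: cos_gt_zero)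
  have "t \<le> tan \<theta>"
  proof (rule ccontr)
    assume "\<not> t \<le> tan \<theta>"
    moreover have "0 < tan \<theta>" using \<theta> by (simp add: tan_gt_zero)
    ultimately have "w * tan \<theta> < t" using w by (smt (verit) mult_left_le_one_le)
    moreover have "0 \<le> (1 - w) * tan \<theta> * t\<^sup>2" using w \<open>0 < tan \<theta>\<close> by simp
    ultimately show False using root by simp
  qed
  show "0 \<le> \<alpha>" unfolding \<alpha>_def using t by simp
  have "arctan (tan \<theta>) = \<theta>" using \<theta> by (simp add: arctan_tan)
  then show "\<alpha> \<le> \<theta>" unfolding \<alpha>_def using \<open>t \<le> tan \<theta>\<close> arctan_monotone' by metis
  have tan\<alpha>: "sin \<alpha> = t * cos \<alpha>" unfolding \<alpha>_def by (simp add: sin_arctan cos_arctan)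
  have unit: "(cos \<alpha>)\<^sup>2 * (1 + t\<^sup>2) = 1"
    using sin_cos_squared_add[of \<alpha>] tan\<alpha> by (simp add: algebra_simps power_mult_distrib)
  have root': "(1 - w) * sin \<theta> * t\<^sup>2 + t * cos \<theta> = w * sin \<theta>"
    using root cos\<theta> by (simp add: tan_def field_simps)
  have "sin \<alpha> * cos (\<theta> - \<alpha>) = (cos \<alpha>)\<^sup>2 * (t * cos \<theta> + t\<^sup>2 * sin \<theta>)"
    by (simp add: cos_diff tan\<alpha> power2_eq_square algebra_simps)
  also have "\<dots> = (cos \<alpha>)\<^sup>2 * (1 + t\<^sup>2) * (w * sin \<theta>)"
    using root' by (simp add: algebra_simps)
  finally show w_part: "sin \<alpha> * cos (\<theta> - \<alpha>) = w * sin \<theta>" using unit by simp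
  have "sin \<theta> = sin (\<theta> - \<alpha>) * cos \<alpha> + cos (\<theta> - \<alpha>) * sin \<alpha>"
    using sin_add[of "\<theta> - \<alpha>" \<alpha>] by simp
  then show "sin (\<theta> - \<alpha>) * cos \<alpha> = (1 - w) * sin \<theta>" using w_part by (simp add: algebra_simps)
qed

lemma slerp_coefficients_inner:
  fixes \<theta> \<alpha> :: real
  assumes "sin \<theta> \<noteq> 0"
  shows "sin (\<theta> - \<alpha>) / sin \<theta> + sin \<alpha> / sin \<theta> * cos \<theta> = cos \<alpha>"
    "sin (\<theta> - \<alpha>) / sin \<theta> * cos \<theta> + sin \<alpha> / sin \<theta> = cos (\<theta> - \<alpha>)"
proof -
  show "sin (\<theta> - \<alpha>) / sin \<theta> + sin \<alpha> / sin \<theta> * cos \<theta> = cos \<alpha>"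
    using assms by (simp add: sin_diff field_simps)
  have "sin \<alpha> = sin (\<theta> - (\<theta> - \<alpha>))" by simp
  then have "sin \<alpha> = sin \<theta> * cos (\<theta> - \<alpha>) - cos \<theta> * sin (\<theta> - \<alpha>)"
    by (simp only: sin_diff[of \<theta> "\<theta> - \<alpha>"])
  then show "sin (\<theta> - \<alpha>) / sin \<theta> * cos \<theta> + sin \<alpha> / sin \<theta> = cos (\<theta> - \<alpha>)"
    using assms by (simp add: field_simps)
qed

lemma slerp_weights:
  fixes p w \<theta> c \<alpha> :: real
  assumes p: "0 < p" "p < 1" and w: "0 \<le> w" "w < 1"
    and \<theta>: "\<theta> = arccos p" and c: "c = tan \<theta>"
    and \<alpha>: "\<alpha> = arctan ((- 1 + sqrt (4 * c\<^sup>2 * (1 - w) - 4 * c\<^sup>2 * (1 - w)\<^sup>2 + 1))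
                        / (2 * c * (1 - w)))"
  defines "s1 \<equiv> sin (\<theta> - \<alpha>) / sin \<theta>" and "s2 \<equiv> sin \<alpha> / sin \<theta>"
  shows "0 \<le> s1" "0 \<le> s2" "s1 * (s1 + s2 * p) = 1 - w" "s2 * (s1 * p + s2) = w"
proof -
  have \<theta>0: "0 < \<theta>" and \<theta>1: "\<theta> < pi / 2"
    unfolding \<theta> using arccos_less_arccos[of p 1] arccos_less_arccos[of 0 p] p by simp_all
  have cos\<theta>: "cos \<theta> = p" unfolding \<theta> using p by simp
  have sin\<theta>: "0 < sin \<theta>" using \<theta>0 \<theta>1 by (simp add: sin_gt_zero)
  have "0 < c" unfolding c using \<theta>0 \<theta>1 by (simp add: tan_gt_zero)
  define t where "t = (- 1 + sqrt (1 + 4 * (c * (1 - w)) * (c * w))) / (2 * (c * (1 - w)))"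
  have "c * (1 - w) * t\<^sup>2 + t = c * w" "0 \<le> t"
    using quadratic_positive_root[of "c * (1 - w)" "c * w"] \<open>0 < c\<close> w unfolding t_def by auto
  then have root: "(1 - w) * tan \<theta> * t\<^sup>2 + t = w * tan \<theta>" "0 \<le> t"
    unfolding c by (simp_all add: algebra_simps)
  have "\<alpha> = arctan t" unfolding \<alpha> t_def by (simp add: power2_eq_square algebra_simps)
  note angle = arctan_root_angle_identities[OF \<theta>0 \<theta>1 w(1) less_imp_le[OF w(2)] root(2,1), folded this]
  have "0 \<le> sin (\<theta> - \<alpha>)" "0 \<le> sin \<alpha>"
    using angle(1,2) \<theta>1 by (auto intro!: sin_ge_zero)
  then show "0 \<le> s1" "0 \<le> s2" unfolding s1_def s2_def using sin\<theta> by simp_all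
  have "s1 + s2 * p = cos \<alpha>" "s1 * p + s2 = cos (\<theta> - \<alpha>)"
    using slerp_coefficients_inner[of \<theta> \<alpha>] sin\<theta> unfolding s1_def s2_def cos\<theta> by simp_all
  then show "s1 * (s1 + s2 * p) = 1 - w" "s2 * (s1 * p + s2) = w"
    using angle(3,4) sin\<theta> unfolding s1_def s2_def by (simp_all add: field_simps)
qed

theorem proposition3:
  fixes m xk :: "real^'n \<Rightarrow> real" and w \<theta> c \<alpha> :: real
  assumes hm: "m \<in> posorth" and hx: "xk \<in> posorth"
    and hpos: "L2inner m xk > 0"
    and hne: "\<not> (AE t in lborel. m t = xk t)"
    and hw: "0 \<le> w" "w < 1"
    and h\<theta>: "\<theta> = arccos (L2inner m xk)"
    and hc: "c = tan \<theta>"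
    and h\<alpha>: "\<alpha> = arctan ((- 1 + sqrt (4 * c\<^sup>2 * (1 - w) - 4 * c\<^sup>2 * (1 - w)\<^sup>2 + 1))
                        / (2 * c * (1 - w)))"
  shows "let mk = (\<lambda>t. sin (\<theta> - \<alpha>) / sin \<theta> * m t + sin \<alpha> / sin \<theta> * xk t);
             F = (\<lambda>x. ereal w * (dS xk x)\<^sup>2 + ereal (1 - w) * (dS m x)\<^sup>2)
         in mk \<in> posorth
            \<and> (\<forall>x \<in> posorth. F mk \<le> F x)
            \<and> (\<forall>x \<in> posorth. F x \<le> F mk \<longrightarrow> (AE t in lborel. x t = mk t))"
proof -
  have "L2inner m xk \<le> 1" "L2inner m xk \<noteq> 1"
    using hm hx hne L2inner_unit_le_one L2inner_unit_eq_one_imp_AE_eq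
    unfolding posorth_def by blast+
  then have "L2inner m xk < 1" by simp
  note weights = slerp_weights[OF hpos this hw h\<theta> hc h\<alpha>]
  show ?thesis
    using frechet_cost_minimizer[OF hm hx hpos hw weights]
    unfolding Let_def frechet_cost_def by blast
qed

end
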